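(* Consider the problem $\min_{x\in\mathbb R^n} f(x)$ subject to $Ax=b$, where $f:\mathbb R^n\to\mathbb R$ is convex and continuously differentiable, $A\in\mathbb R^{m\times n}$, $b\in\mathbb R^m$, and assume the KKT set $\Omega$ is nonempty. Let $\{(x_k,\lambda_k)\}_{k\ge0}$ be generated by the accelerated augmented Lagrangian method described in the context (in either Case I or Case II), and fix $(x^*,\lambda^* )\in\Omega$. Then: (i) $(\eta-\rho)\sum_{k=1}^{+\infty} t_{k+1}\big(\mathcal L_\beta(x_k,\lambda^* )-\mathcal L_\beta(x^*,\lambda^* )\big)<+\infty$ and $(1-\eta)\sum_{k=1}^{+\infty} t_{k+1}\|(x_{k+1},\lambda_{k+1})-(x_k,\lambda_k)\|_M^2<+\infty$. (ii) For all $k\ge1$, $\mathcal L_\beta(x_k,\lambda^* )-\mathcal L_\beta(x^*,\lambda^* )\le \mathcal E_1/t_k^2$, where $\mathcal E_1=\mathcal L_\beta(x_1,\lambda^* )-\mathcal L_\beta(x^*,\lambda^* )+\frac{\eta}{2\gamma}\|x_1-x^*\|^2+\frac{\eta}{2\delta}\|\lambda_1-\lambda^*\|^2$. (iii) The sequence $\{(x_k,\lambda_k)\}_{k\ge0}$ is bounded, and for all $k>1$, $\|(x_k,\lambda_k)-(x_{k-1},\lambda_{k-1})\|_M\le \frac{2\sqrt{2\mathcal E_1}}{t_k-1}$. (iv) There exists a constant $C>0$ such that for all $k\ge1$, $\|Ax_k-b\|\le C/t_k^2$ and $|f(x_k)-f(x^* )|\le \big(\mathcal E_1+\|\lambda^*\|C+\beta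 C^2/2\big)/t_k^2$.
   Context: The KKT set is $\Omega=\{(x^*,\lambda^* )\in\mathbb R^n\times\mathbb R^m: Ax^*=b,\ \nabla f(x^* )+A^\top\lambda^*=0\}$. For $\beta\ge0$, the augmented Lagrangian is $\mathcal L_\beta(x,\lambda)=f(x)+\langle\lambda,Ax-b\rangle+\frac\beta2\|Ax-b\|^2$. For $\gamma,\delta>0$ and $z=(x,\lambda)$, $\|z\|_M^2=\frac1\gamma\|x\|^2+\frac1\delta\|\lambda\|^2$ (i.e. $M=\mathrm{diag}(\gamma^{-1}I_n,\delta^{-1}I_m)$). Parameter sequence: $\{t_k\}_{k\ge1}$ is nondecreasing, $t_1=1$, $t_k>1$ for all $k>2$, $t_k\to+\infty$, and $t_{k+1}^2-t_k^2\le\rho t_{k+1}$ for all $k\ge 1$, with fixed $\rho\in(0,1]$. Fix $\eta\in[\rho,1]$, $\gamma>0$, $\delta>0$, $\beta\ge0$. Algorithm: initial points $x_0=x_1\in\mathbb R^n$, $\lambda_0=\lambda_1\in\mathbb R^m$. For $k=1,2,\dots$: set $\alpha_k=(t_{k+1}-\eta)/\eta$, $c_k=t_{k+1}/\eta$, $\bar x_k=x_k+\frac{t_k-1}{t_{k+1}}(x_k-x_{k-1})$, $\bar\lambda_k=\lambda_k+\frac{t_k-1}{t_{k+1}}(\lambda_k-\lambda_{k-1})$, $p_k=c_k\bar\lambda_k-\alpha_k\lambda_k$, $r_k=\alpha_kAx_k+b$. Case I ($f$ convex and $C^1$): $x_{k+1}=\arg\min_{x}\{f(x)+\frac\beta2\|Ax-b\|^2+\frac1{2\gamma}\|x-\bar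 x_k\|^2+\langle p_k,Ax-b\rangle+\frac\delta2\|c_kAx-r_k\|^2\}$. Case II ($f$ convex with $L$-Lipschitz gradient, and $\gamma\le 1/L$): $x_{k+1}=\arg\min_{x}\{\langle\nabla f(\bar x_k),x\rangle+\frac\beta2\|Ax-b\|^2+\frac1{2\gamma}\|x-\bar x_k\|^2+\langle p_k,Ax-b\rangle+\frac\delta2\|c_kAx-r_k\|^2\}$. Then $\lambda_{k+1}=\bar\lambda_k+\delta(c_kAx_{k+1}-r_k)$. *)

theory Defs
  imports "HOL-Analysis.Analysis"
begin

definition KKT_set :: "(real^'n \<Rightarrow> real^'n) \<Rightarrow> real^'n^'m \<Rightarrow> real^'m \<Rightarrow> ((real^'n) \<times> (real^'m)) set" where
  "KKT_set g A b = {(xs, ls). A *v xs = b \<and> g xs + transpose A *v ls = 0}"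

definition aug_lag :: "(real^'n \<Rightarrow> real) \<Rightarrow> real^'n^'m \<Rightarrow> real^'m \<Rightarrow> real \<Rightarrow> real^'n \<Rightarrow> real^'m \<Rightarrow> real" where
  "aug_lag f A b \<beta> x l = f x + l \<bullet> (A *v x - b) + \<beta> / 2 * (norm (A *v x - b))\<^sup>2"

definition M_norm :: "real \<Rightarrow> real \<Rightarrow> real^'n \<Rightarrow> real^'m \<Rightarrow> real" where
  "M_norm \<gamma> \<delta> x l = sqrt ((1 / \<gamma>) * (norm x)\<^sup>2 + (1 / \<delta>) * (norm l)\<^sup>2)"

text \<open>Objective of the x-subproblem, with smooth part F (F = f in Case I,
  F = linearization x \<mapsto> <grad f(xbar_k), x> in Case II).\<close>
definition sub_obj :: "(real^'n \<Rightarrow> real) \<Rightarrow> real^'n^'m \<Rightarrow> real^'m \<Rightarrow> real \<Rightarrow> real \<Rightarrow> real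
     \<Rightarrow> real^'n \<Rightarrow> real^'m \<Rightarrow> real \<Rightarrow> real^'m \<Rightarrow> real^'n \<Rightarrow> real" where
  "sub_obj F A b \<beta> \<gamma> \<delta> xb p c r x =
     F x + \<beta> / 2 * (norm (A *v x - b))\<^sup>2 + 1 / (2 * \<gamma>) * (norm (x - xb))\<^sup>2
     + p \<bullet> (A *v x - b) + \<delta> / 2 * (norm (c *\<^sub>R (A *v x) - r))\<^sup>2"

definition alpha_k :: "(nat \<Rightarrow> real) \<Rightarrow> real \<Rightarrow> nat \<Rightarrow> real" where
  "alpha_k t \<eta> k = (t (Suc k) - \<eta>) / \<eta>"

definition c_k :: "(nat \<Rightarrow> real) \<Rightarrow> real \<Rightarrow> nat \<Rightarrow> real" where
  "c_k t \<eta> k = t (Suc k) / \<eta>"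

definition extrap :: "(nat \<Rightarrow> real) \<Rightarrow> (nat \<Rightarrow> 'a::real_vector) \<Rightarrow> nat \<Rightarrow> 'a" where
  "extrap t z k = z k + ((t k - 1) / t (Suc k)) *\<^sub>R (z k - z (k - 1))"

definition p_k :: "(nat \<Rightarrow> real) \<Rightarrow> real \<Rightarrow> (nat \<Rightarrow> real^'m) \<Rightarrow> nat \<Rightarrow> real^'m" where
  "p_k t \<eta> l k = c_k t \<eta> k *\<^sub>R extrap t l k - alpha_k t \<eta> k *\<^sub>R l k"

definition r_k :: "(nat \<Rightarrow> real) \<Rightarrow> real \<Rightarrow> real^'n^'m \<Rightarrow> real^'m \<Rightarrow> (nat \<Rightarrow> real^'n) \<Rightarrow> nat \<Rightarrow> real^'m" where
  "r_k t \<eta> A b x k = alpha_k t \<eta> k *\<^sub>R (A *v x k) + b"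

end

theory Submission
  imports Defs
begin

text \<open>
  The proof is a Lyapunov argument in the scaled variables
  \<open>z = (x / sqrt \<gamma>, \<lambda> / sqrt \<delta>)\<close>, in which the \<open>M\<close>-norm is the Euclidean norm.
  With \<open>z* = (x*, \<lambda>*)\<close> and the Lagrangian gap \<open>G k = L(x k, \<lambda>*) - L(x*, \<lambda>*) \<ge> 0\<close>, the energy
    \<open>E k = t k\<^sup>2 G k + (|\<eta> (z k - z*) + (t k - 1) (z k - z (k - 1))|\<^sup>2 + \<eta> (1 - \<eta>) |z k - z*|\<^sup>2) / 2\<close>
  satisfies
    \<open>E (k + 1) + (\<eta> - \<rho>) t (k + 1) G k + (1 - \<eta>) t (k + 1) / 2 |z (k + 1) - z k|\<^sup>2 \<le> E k\<close>.
  For the primal part, both versions of the \<open>x\<close>-update satisfy a proximal three-point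
  inequality, which is tested at \<open>x k\<close> and at \<open>x*\<close> with the weights \<open>t (k + 1)\<^sup>2 - \<eta> t (k + 1)\<close>
  and \<open>\<eta> t (k + 1)\<close>; for the dual part, the \<open>\<lambda>\<close>-update turns the multiplier terms into an
  exact expansion of squares.  Telescoping, together with \<open>E 1 = E1\<close>, gives (i) and (ii).
  The bound on the momentum \<open>\<eta> (z k - z*) + (t k - 1) (z k - z (k - 1))\<close> gives boundedness
  and (iii), and the feasibility rate in (iv) comes from a convex recurrence for
  \<open>t k\<^sup>2 (A x k - b)\<close> corrected by the dual momentum.
\<close>

lemma GDERIV_line_has_real_derivative:
  fixes f :: "'a::real_inner \<Rightarrow> real"
  assumes grad: "\<And>y. GDERIV f y :> g y"
  shows "((\<lambda>s. f (x + s *\<^sub>R d)) has_real_derivative inner (g (x + s *\<^sub>R d)) d) (at s)"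
proof -
  have "(f has_derivative (\<lambda>h. inner h (g (x + s *\<^sub>R d)))) (at (x + s *\<^sub>R d))"
    using grad by (simp add: gderiv_def)
  moreover have "((\<lambda>s. x + s *\<^sub>R d) has_derivative (\<lambda>s. s *\<^sub>R d)) (at s)"
    by (auto intro!: derivative_eq_intros)
  ultimately have "((\<lambda>s. f (x + s *\<^sub>R d)) has_derivative (\<lambda>h. inner (h *\<^sub>R d) (g (x + s *\<^sub>R d)))) (at s)"
    using has_derivative_compose by blast
  then show ?thesis
    by (simp add: has_field_derivative_def inner_commute mult_commute_abs)
qed

lemma convex_on_gradient_ineq:
  fixes f :: "'a::real_inner \<Rightarrow> real"
  assumes cvx: "convex_on UNIV f" and grad: "\<And>y. GDERIV f y :> g y"
  shows "f x + inner (g x) (y - x) \<le> f y"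
proof -
  define \<phi> where "\<phi> s = f (x + s *\<^sub>R (y - x))" for s :: real
  have "convex_on UNIV \<phi>"
  proof (rule convex_onI)
    fix u a c :: real assume "0 < u" "u < 1"
    moreover have "x + ((1 - u) *\<^sub>R a + u *\<^sub>R c) *\<^sub>R (y - x)
        = (1 - u) *\<^sub>R (x + a *\<^sub>R (y - x)) + u *\<^sub>R (x + c *\<^sub>R (y - x))"
      by (simp add: algebra_simps)
    ultimately show "\<phi> ((1 - u) *\<^sub>R a + u *\<^sub>R c) \<le> (1 - u) * \<phi> a + u * \<phi> c"
      unfolding \<phi>_def using convex_onD[OF cvx, of u] by auto
  qed auto
  moreover have "(\<phi> has_field_derivative inner (g x) (y - x)) (at 0 within UNIV)"
    using GDERIV_line_has_real_derivative[OF grad, of x "y - x" 0] by (simp add: \<phi>_def[abs_def])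
  ultimately have "\<phi> 1 - \<phi> 0 \<ge> inner (g x) (y - x) * (1 - 0)"
    by (intro convex_on_imp_above_tangent) auto
  then show ?thesis by (simp add: \<phi>_def)
qed

lemma Lipschitz_gradient_descent_ineq:
  fixes f :: "'a::real_inner \<Rightarrow> real"
  assumes grad: "\<And>y. GDERIV f y :> g y"
    and lip: "\<And>u v. norm (g u - g v) \<le> L * norm (u - v)"
  shows "f y \<le> f x + inner (g x) (y - x) + L / 2 * (norm (y - x))\<^sup>2"
proof -
  define d where "d = y - x"
  define \<psi> where "\<psi> s = f (x + s *\<^sub>R d) - s * inner (g x) d - L / 2 * s\<^sup>2 * (norm d)\<^sup>2" for s :: real
  have "\<psi> 1 \<le> \<psi> 0"
  proof (rule DERIV_nonpos_imp_nonincreasing[of 0 1 \<psi>])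
    fix s :: real assume s: "0 \<le> s" "s \<le> 1"
    have "(\<psi> has_real_derivative inner (g (x + s *\<^sub>R d) - g x) d - L * s * (norm d)\<^sup>2) (at s)"
      unfolding \<psi>_def[abs_def] inner_diff_left
      by (rule derivative_eq_intros GDERIV_line_has_real_derivative[OF grad] refl | simp)+
    moreover have "inner (g (x + s *\<^sub>R d) - g x) d \<le> L * s * (norm d)\<^sup>2"
    proof -
      have "inner (g (x + s *\<^sub>R d) - g x) d \<le> norm (g (x + s *\<^sub>R d) - g x) * norm d"
        by (rule norm_cauchy_schwarz)
      also have "\<dots> \<le> L * norm (s *\<^sub>R d) * norm d"
        using lip[of "x + s *\<^sub>R d" x] by (simp add: mult_right_mono)
      finally show ?thesis using s by (simp add: power2_eq_square mult.assoc)
    qed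
    ultimately show "\<exists>y. (\<psi> has_real_derivative y) (at s) \<and> y \<le> 0" by force
  qed auto
  then show ?thesis by (simp add: \<psi>_def d_def)
qed

lemma power2_norm_convex_combination:
  fixes a c :: "'a::real_inner"
  shows "(norm ((1 - u) *\<^sub>R a + u *\<^sub>R c))\<^sup>2
    = (1 - u) * (norm a)\<^sup>2 + u * (norm c)\<^sup>2 - u * (1 - u) * (norm (a - c))\<^sup>2"
  unfolding power2_norm_eq_inner
  by (simp add: inner_add_left inner_add_right inner_diff_left inner_diff_right inner_commute algebra_simps)

lemma convex_on_aug_lag:
  fixes F :: "real^'n \<Rightarrow> real"
  assumes "convex_on UNIV F" and "\<beta> \<ge> 0"
  shows "convex_on UNIV (\<lambda>y. aug_lag F A b \<beta> y \<mu>)"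
proof -
  have affine: "A *v ((1 - u) *\<^sub>R y + u *\<^sub>R z) - b = (1 - u) *\<^sub>R (A *v y - b) + u *\<^sub>R (A *v z - b)"
    for u and y z :: "real^'n"
    by (simp add: matrix_vector_right_distrib matrix_vector_mult_scaleR algebra_simps)
  have "convex_on UNIV (\<lambda>y. \<mu> \<bullet> (A *v y - b))"
    by (rule convex_onI) (simp_all add: affine inner_add_right)
  moreover have "convex_on UNIV (\<lambda>y. (norm (A *v y - b))\<^sup>2)"
    by (rule convex_onI) (simp_all add: affine power2_norm_convex_combination)
  ultimately show ?thesis
    unfolding aug_lag_def using assms by (intro convex_on_add convex_on_cmul) auto
qed

lemma le_of_forall_small_le_add_mult:
  fixes a b c :: real
  assumes small: "\<And>\<theta>. 0 < \<theta> \<Longrightarrow> \<theta> \<le> 1 \<Longrightarrow> a \<le> b + \<theta> * c"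
  shows "a \<le> b"
proof (rule field_le_epsilon)
  fix e :: real assume "0 < e"
  define \<theta> where "\<theta> = min 1 (e / (\<bar>c\<bar> + 1))"
  have \<theta>: "0 < \<theta>" "\<theta> \<le> 1" using \<open>0 < e\<close> by (auto simp: \<theta>_def)
  have "\<theta> * c \<le> \<theta> * (\<bar>c\<bar> + 1)" using \<theta> by (intro mult_left_mono) auto
  also have "\<dots> \<le> e / (\<bar>c\<bar> + 1) * (\<bar>c\<bar> + 1)" by (intro mult_right_mono) (auto simp: \<theta>_def)
  finally have "\<theta> * c \<le> e" by simp
  then show "a \<le> b + e" using small[OF \<theta>] by linarith
qed

text \<open>A minimiser of a \<open>1/\<gamma>\<close>-strongly convex function up to a second-order error
  satisfies the three-point inequality: test the quasi-minimality against
  \<open>xp + \<theta> (y - xp)\<close> and let \<open>\<theta> \<rightarrow> 0\<close>.\<close>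
lemma quasi_argmin_three_point_ineq:
  fixes G :: "'a::real_inner \<Rightarrow> real"
  assumes cvx: "convex_on UNIV G"
    and quasi_min: "\<And>y. G xp + (norm (xp - xb))\<^sup>2 / (2 * \<gamma>)
      \<le> G y + (norm (y - xb))\<^sup>2 / (2 * \<gamma>) + K * (norm (y - xp))\<^sup>2"
  shows "G xp + (norm (xp - xb))\<^sup>2 / (2 * \<gamma>) + (norm (y - xp))\<^sup>2 / (2 * \<gamma>)
    \<le> G y + (norm (y - xb))\<^sup>2 / (2 * \<gamma>)"
proof (rule le_of_forall_small_le_add_mult)
  fix \<theta> :: real assume \<theta>: "0 < \<theta>" "\<theta> \<le> 1"
  define z where "z = (1 - \<theta>) *\<^sub>R xp + \<theta> *\<^sub>R y"
  define N where "N = (norm (y - xp))\<^sup>2"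
  define X0 Xy Xz XN where "X0 = (norm (xp - xb))\<^sup>2 / (2 * \<gamma>)" and "Xy = (norm (y - xb))\<^sup>2 / (2 * \<gamma>)"
    and "Xz = (norm (z - xb))\<^sup>2 / (2 * \<gamma>)" and "XN = N / (2 * \<gamma>)"
  have "z - xp = \<theta> *\<^sub>R (y - xp)" by (simp add: z_def algebra_simps)
  then have h1: "G xp + X0 \<le> G z + Xz + K * (\<theta>\<^sup>2 * N)"
    using quasi_min[of z] by (simp add: X0_def Xz_def N_def power_mult_distrib)
  have h2: "G z \<le> (1 - \<theta>) * G xp + \<theta> * G y"
    unfolding z_def using convex_onD[OF cvx, of \<theta> xp y] \<theta> by auto
  have h3: "Xz = (1 - \<theta>) * X0 + \<theta> * Xy - \<theta> * (1 - \<theta>) * XN"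
  proof -
    have "z - xb = (1 - \<theta>) *\<^sub>R (xp - xb) + \<theta> *\<^sub>R (y - xb)" by (simp add: z_def algebra_simps)
    then show ?thesis
      by (simp add: X0_def Xy_def Xz_def XN_def N_def power2_norm_convex_combination
          norm_minus_commute diff_divide_distrib add_divide_distrib)
  qed
  from h1 h2 h3 have "\<theta> * (G xp + X0 + XN) \<le> \<theta> * (G y + Xy + \<theta> * (XN + K * N))"
    by (simp add: algebra_simps power2_eq_square)
  then show "G xp + (norm (xp - xb))\<^sup>2 / (2 * \<gamma>) + (norm (y - xp))\<^sup>2 / (2 * \<gamma>)
      \<le> G y + (norm (y - xb))\<^sup>2 / (2 * \<gamma>) + \<theta> * (XN + K * N)"
    using \<theta> by (simp add: X0_def Xy_def XN_def N_def)
qed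

lemma sub_obj_diff:
  fixes A :: "real^'n^'m" and p r :: "real^'m" and xp y :: "real^'n" and c \<delta> :: real
  defines "\<mu> \<equiv> p + (\<delta> * c) *\<^sub>R (c *\<^sub>R (A *v xp) - r)"
  shows "sub_obj F A b \<beta> \<gamma> \<delta> xb p c r y - sub_obj F A b \<beta> \<gamma> \<delta> xb p c r xp
    = (aug_lag F A b \<beta> y \<mu> + (norm (y - xb))\<^sup>2 / (2 * \<gamma>) + \<delta> / 2 * c\<^sup>2 * (norm (A *v (y - xp)))\<^sup>2)
      - (aug_lag F A b \<beta> xp \<mu> + (norm (xp - xb))\<^sup>2 / (2 * \<gamma>))"
proof -
  define s where "s = c *\<^sub>R (A *v xp) - r"
  have split: "c *\<^sub>R (A *v y) - r = c *\<^sub>R (A *v (y - xp)) + s"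
    by (simp add: s_def matrix_vector_mult_diff_distrib algebra_simps)
  have "inner s (A *v (y - xp)) = inner s (A *v y - b) - inner s (A *v xp - b)"
    by (simp add: matrix_vector_mult_diff_distrib inner_diff_right)
  then have "(norm (c *\<^sub>R (A *v y) - r))\<^sup>2 - (norm s)\<^sup>2
      = c\<^sup>2 * (norm (A *v (y - xp)))\<^sup>2 + 2 * c * (inner s (A *v y - b) - inner s (A *v xp - b))"
    unfolding split power2_norm_eq_inner
    by (simp add: inner_add_left inner_add_right inner_commute power2_eq_square algebra_simps)
  then have "\<delta> / 2 * ((norm (c *\<^sub>R (A *v y) - r))\<^sup>2 - (norm s)\<^sup>2)
      = \<delta> / 2 * (c\<^sup>2 * (norm (A *v (y - xp)))\<^sup>2 + 2 * c * (inner s (A *v y - b) - inner s (A *v xp - b)))"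
    by (rule arg_cong)
  then have "\<delta> / 2 * (norm (c *\<^sub>R (A *v y) - r))\<^sup>2 - \<delta> / 2 * (norm s)\<^sup>2
      = \<delta> / 2 * c\<^sup>2 * (norm (A *v (y - xp)))\<^sup>2 + (\<delta> * c) * inner s (A *v y - b) - (\<delta> * c) * inner s (A *v xp - b)"
    by (simp add: algebra_simps)
  then show ?thesis
    unfolding sub_obj_def aug_lag_def \<mu>_def s_def[symmetric] inner_add_left inner_scaleR_left
    by (simp add: algebra_simps)
qed

thm sub_obj_diff
lemma sub_obj_argmin_three_point_ineq:
  fixes F :: "real^'n \<Rightarrow> real" and A :: "real^'n^'m" and p r :: "real^'m" and xp :: "real^'n" and c \<delta> :: real
  defines "\<mu> \<equiv> p + (\<delta> * c) *\<^sub>R (c *\<^sub>R (A *v xp) - r)"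
  assumes cvx: "convex_on UNIV F" and "\<beta> \<ge> 0" "\<delta> \<ge> 0"
    and argmin: "\<And>y. sub_obj F A b \<beta> \<gamma> \<delta> xb p c r xp \<le> sub_obj F A b \<beta> \<gamma> \<delta> xb p c r y"
  shows "aug_lag F A b \<beta> xp \<mu> + (norm (xp - xb))\<^sup>2 / (2 * \<gamma>) + (norm (y - xp))\<^sup>2 / (2 * \<gamma>)
    \<le> aug_lag F A b \<beta> y \<mu> + (norm (y - xb))\<^sup>2 / (2 * \<gamma>)"
proof -
  obtain K where K: "\<And>v. norm (A *v v) \<le> norm v * K"
    using bounded_linear.bounded[OF matrix_vector_mul_bounded_linear] by blast
  show ?thesis
  proof (rule quasi_argmin_three_point_ineq[where K = "\<delta> / 2 * c\<^sup>2 * K\<^sup>2"])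
    fix y
    have "(norm (A *v (y - xp)))\<^sup>2 \<le> (norm (y - xp) * K)\<^sup>2"
      using K by (intro power_mono) auto
    then have "\<delta> / 2 * c\<^sup>2 * (norm (A *v (y - xp)))\<^sup>2 \<le> \<delta> / 2 * c\<^sup>2 * (norm (y - xp) * K)\<^sup>2"
      using \<open>\<delta> \<ge> 0\<close> by (intro mult_left_mono) auto
    also have "\<dots> = \<delta> / 2 * c\<^sup>2 * K\<^sup>2 * (norm (y - xp))\<^sup>2"
      by (simp add: power_mult_distrib)
    finally have "\<delta> / 2 * c\<^sup>2 * (norm (A *v (y - xp)))\<^sup>2 \<le> \<delta> / 2 * c\<^sup>2 * K\<^sup>2 * (norm (y - xp))\<^sup>2" .
    moreover have "0 \<le> sub_obj F A b \<beta> \<gamma> \<delta> xb p c r y - sub_obj F A b \<beta> \<gamma> \<delta> xb p c r xp"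
      using argmin[of y] by simp
    ultimately show "aug_lag F A b \<beta> xp \<mu> + (norm (xp - xb))\<^sup>2 / (2 * \<gamma>)
        \<le> aug_lag F A b \<beta> y \<mu> + (norm (y - xb))\<^sup>2 / (2 * \<gamma>) + \<delta> / 2 * c\<^sup>2 * K\<^sup>2 * (norm (y - xp))\<^sup>2"
      unfolding sub_obj_diff \<mu>_def by linarith
  qed (use convex_on_aug_lag[OF cvx \<open>\<beta> \<ge> 0\<close>] in auto)
qed

lemma sub_obj_argmin_prox_ineq:
  fixes f :: "real^'n \<Rightarrow> real" and A :: "real^'n^'m" and p r :: "real^'m" and xp :: "real^'n" and c \<delta> :: real
  defines "\<mu> \<equiv> p + (\<delta> * c) *\<^sub>R (c *\<^sub>R (A *v xp) - r)"
  assumes "convex_on UNIV f" and "\<beta> \<ge> 0" "\<gamma> > 0" "\<delta> \<ge> 0"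
    and "\<And>y. sub_obj f A b \<beta> \<gamma> \<delta> xb p c r xp \<le> sub_obj f A b \<beta> \<gamma> \<delta> xb p c r y"
  shows "aug_lag f A b \<beta> xp \<mu> + (norm (y - xp))\<^sup>2 / (2 * \<gamma>)
    \<le> aug_lag f A b \<beta> y \<mu> + (norm (y - xb))\<^sup>2 / (2 * \<gamma>)"
proof -
  have "0 \<le> (norm (xp - xb))\<^sup>2 / (2 * \<gamma>)" using \<open>\<gamma> > 0\<close> by simp
  then show ?thesis using sub_obj_argmin_three_point_ineq[OF assms(2,3,5,6), of y] unfolding \<mu>_def by linarith
qed

lemma linearized_sub_obj_argmin_prox_ineq:
  fixes f :: "real^'n \<Rightarrow> real" and A :: "real^'n^'m" and p r :: "real^'m" and xp :: "real^'n" and c \<delta> :: real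
  defines "\<mu> \<equiv> p + (\<delta> * c) *\<^sub>R (c *\<^sub>R (A *v xp) - r)"
  assumes cvx: "convex_on UNIV f" and grad: "\<And>y. GDERIV f y :> g y"
    and lip: "\<And>u v. norm (g u - g v) \<le> L * norm (u - v)" and "L > 0" "\<gamma> \<le> 1 / L"
    and "\<beta> \<ge> 0" "\<gamma> > 0" "\<delta> \<ge> 0"
    and argmin: "\<And>y. sub_obj (\<lambda>z. g xb \<bullet> z) A b \<beta> \<gamma> \<delta> xb p c r xp
      \<le> sub_obj (\<lambda>z. g xb \<bullet> z) A b \<beta> \<gamma> \<delta> xb p c r y"
  shows "aug_lag f A b \<beta> xp \<mu> + (norm (y - xp))\<^sup>2 / (2 * \<gamma>)
    \<le> aug_lag f A b \<beta> y \<mu> + (norm (y - xb))\<^sup>2 / (2 * \<gamma>)"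
proof -
  have "convex_on UNIV (\<lambda>z. g xb \<bullet> z)"
    by (rule convex_onI) (simp_all add: inner_add_right)
  from sub_obj_argmin_three_point_ineq[OF this assms(7,9,10), of y]
  have "aug_lag (\<lambda>z. g xb \<bullet> z) A b \<beta> xp \<mu> + (norm (xp - xb))\<^sup>2 / (2 * \<gamma>) + (norm (y - xp))\<^sup>2 / (2 * \<gamma>)
      \<le> aug_lag (\<lambda>z. g xb \<bullet> z) A b \<beta> y \<mu> + (norm (y - xb))\<^sup>2 / (2 * \<gamma>)"
    unfolding \<mu>_def .
  moreover have "aug_lag (\<lambda>z. g xb \<bullet> z) A b \<beta> z \<mu> = aug_lag f A b \<beta> z \<mu> - f z + g xb \<bullet> z" for z
    by (simp add: aug_lag_def)
  moreover have "f xb + g xb \<bullet> (y - xb) \<le> f y"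
    by (rule convex_on_gradient_ineq[OF cvx grad])
  moreover have "f xp \<le> f xb + g xb \<bullet> (xp - xb) + L / 2 * (norm (xp - xb))\<^sup>2"
    by (rule Lipschitz_gradient_descent_ineq[OF grad lip])
  moreover have "L / 2 * (norm (xp - xb))\<^sup>2 \<le> (norm (xp - xb))\<^sup>2 / (2 * \<gamma>)"
  proof -
    have "L \<le> 1 / \<gamma>" using \<open>L > 0\<close> \<open>\<gamma> > 0\<close> \<open>\<gamma> \<le> 1 / L\<close> by (simp add: field_simps)
    then have "L / 2 * (norm (xp - xb))\<^sup>2 \<le> (1 / \<gamma>) / 2 * (norm (xp - xb))\<^sup>2"
      by (intro mult_right_mono) auto
    then show ?thesis by simp
  qed
  ultimately show ?thesis by (simp add: inner_diff_right)
qed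

definition lyap_quad :: "real \<Rightarrow> real \<Rightarrow> 'a::real_inner \<Rightarrow> 'a \<Rightarrow> 'a \<Rightarrow> real" where
  "lyap_quad \<eta> t zs z zm = (norm (\<eta> *\<^sub>R (z - zs) + (t - 1) *\<^sub>R (z - zm)))\<^sup>2 + \<eta> * (1 - \<eta>) * (norm (z - zs))\<^sup>2"

lemma lyap_quad_nonneg: "0 \<le> \<eta> \<Longrightarrow> \<eta> \<le> 1 \<Longrightarrow> 0 \<le> lyap_quad \<eta> t zs z zm"
  unfolding lyap_quad_def by simp

lemma lyap_quad_one: "lyap_quad \<eta> 1 zs z zm = \<eta> * (norm (z - zs))\<^sup>2"
proof -
  have "lyap_quad \<eta> 1 zs z zm = \<eta>\<^sup>2 * (norm (z - zs))\<^sup>2 + \<eta> * (1 - \<eta>) * (norm (z - zs))\<^sup>2"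
    by (simp add: lyap_quad_def power_mult_distrib)
  then show ?thesis by (simp add: algebra_simps power2_eq_square)
qed

lemma inner_momentum_eq_lyap_quad_diff:
  fixes zs zm z zp :: "'a::real_inner"
  shows "2 * inner (\<eta> *\<^sub>R (z - zs) + T *\<^sub>R (zp - z)) (T *\<^sub>R (zp - z) - (t - 1) *\<^sub>R (z - zm))
    = (norm (T *\<^sub>R (zp - z) - (t - 1) *\<^sub>R (z - zm)))\<^sup>2 + (1 - \<eta>) * (2 * T - 1) * (norm (zp - z))\<^sup>2
      + lyap_quad \<eta> T zs zp z - lyap_quad \<eta> t zs z zm"
proof -
  define e p d where "e = z - zs" and "p = zp - z" and "d = z - zm"
  have "zp - zs = e + p" by (simp add: e_def p_def)
  then show ?thesis
    unfolding lyap_quad_def e_def[symmetric] p_def[symmetric] d_def[symmetric] power2_norm_eq_inner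
    by (simp add: inner_add_left inner_add_right inner_diff_left inner_diff_right inner_commute
        algebra_simps power2_eq_square)
qed

lemma extrapolation_prox_identity:
  fixes x xm xp xs xb :: "'a::real_inner"
  assumes xb: "xb = x + ((t - 1) / T) *\<^sub>R (x - xm)" and "T \<noteq> 0"
  shows "(T\<^sup>2 - \<eta> * T) * ((norm (x - xb))\<^sup>2 - (norm (x - xp))\<^sup>2) + \<eta> * T * ((norm (xs - xb))\<^sup>2 - (norm (xs - xp))\<^sup>2)
    = lyap_quad \<eta> t xs x xm - lyap_quad \<eta> T xs xp x - (1 - \<eta>) * (2 * T - 1) * (norm (xp - x))\<^sup>2"
proof -
  define a e p d where "a = (t - 1) / T" and "e = x - xs" and "p = xp - x" and "d = x - xm"
  have "t - 1 = T * a" using \<open>T \<noteq> 0\<close> by (simp add: a_def)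
  then have "(T\<^sup>2 - \<eta> * T) * ((norm (a *\<^sub>R d))\<^sup>2 - (norm p)\<^sup>2) + \<eta> * T * ((norm (e + a *\<^sub>R d))\<^sup>2 - (norm (e + p))\<^sup>2)
      = (norm (T *\<^sub>R p - (t - 1) *\<^sub>R d))\<^sup>2 - 2 * inner (\<eta> *\<^sub>R e + T *\<^sub>R p) (T *\<^sub>R p - (t - 1) *\<^sub>R d)"
    unfolding power2_norm_eq_inner
    by (simp add: inner_add_left inner_add_right inner_diff_left inner_diff_right inner_commute
        algebra_simps power2_eq_square)
  moreover have "x - xb = - (a *\<^sub>R d)" "x - xp = - p" "xs - xb = - (e + a *\<^sub>R d)" "xs - xp = - (e + p)"
    by (simp_all add: xb a_def e_def p_def d_def)
  moreover note inner_momentum_eq_lyap_quad_diff[of \<eta> x xs T xp t xm, folded e_def p_def d_def]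
  ultimately show ?thesis unfolding p_def[symmetric] by (simp only: norm_minus_cancel)
qed

text \<open>\<open>M_scale\<close> is an isometry from \<open>(x, \<lambda>)\<close> with the \<open>M\<close>-norm onto the product space.\<close>
definition M_scale :: "real \<Rightarrow> real \<Rightarrow> 'a::real_normed_vector \<Rightarrow> 'b::real_normed_vector \<Rightarrow> 'a \<times> 'b" where
  "M_scale \<gamma> \<delta> a c = ((1 / sqrt \<gamma>) *\<^sub>R a, (1 / sqrt \<delta>) *\<^sub>R c)"

lemma M_scale_diff: "M_scale \<gamma> \<delta> a c - M_scale \<gamma> \<delta> a' c' = M_scale \<gamma> \<delta> (a - a') (c - c')"
  and M_scale_add: "M_scale \<gamma> \<delta> a c + M_scale \<gamma> \<delta> a' c' = M_scale \<gamma> \<delta> (a + a') (c + c')"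
  and M_scale_scaleR: "u *\<^sub>R M_scale \<gamma> \<delta> a c = M_scale \<gamma> \<delta> (u *\<^sub>R a) (u *\<^sub>R c)"
  by (simp_all add: M_scale_def algebra_simps)

lemma power2_norm_M_scale:
  assumes "\<gamma> > 0" "\<delta> > 0"
  shows "(norm (M_scale \<gamma> \<delta> a c))\<^sup>2 = (norm a)\<^sup>2 / \<gamma> + (norm c)\<^sup>2 / \<delta>"
  using assms by (simp add: M_scale_def norm_Pair power_mult_distrib power_divide)

lemma norm_M_scale:
  assumes "\<gamma> > 0" "\<delta> > 0"
  shows "norm (M_scale \<gamma> \<delta> a c) = M_norm \<gamma> \<delta> a c"
proof -
  have "(norm (M_scale \<gamma> \<delta> a c))\<^sup>2 = (1 / \<gamma>) * (norm a)\<^sup>2 + (1 / \<delta>) * (norm c)\<^sup>2"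
    using power2_norm_M_scale[OF assms] by simp
  then show ?thesis unfolding M_norm_def by (metis norm_ge_zero real_sqrt_unique)
qed

lemma norm_le_norm_M_scale:
  assumes "\<gamma> > 0" "\<delta> > 0"
  shows "norm a \<le> sqrt \<gamma> * norm (M_scale \<gamma> \<delta> a c)" and "norm c \<le> sqrt \<delta> * norm (M_scale \<gamma> \<delta> a c)"
proof -
  have "norm ((1 / sqrt \<gamma>) *\<^sub>R a) \<le> norm (M_scale \<gamma> \<delta> a c)" "norm ((1 / sqrt \<delta>) *\<^sub>R c) \<le> norm (M_scale \<gamma> \<delta> a c)"
    unfolding M_scale_def by (metis fst_conv norm_fst_le, metis snd_conv norm_snd_le)
  then have "norm a / sqrt \<gamma> \<le> norm (M_scale \<gamma> \<delta> a c)" "norm c / sqrt \<delta> \<le> norm (M_scale \<gamma> \<delta> a c)"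
    using assms by simp_all
  then show "norm a \<le> sqrt \<gamma> * norm (M_scale \<gamma> \<delta> a c)" "norm c \<le> sqrt \<delta> * norm (M_scale \<gamma> \<delta> a c)"
    using assms by (simp_all add: pos_divide_le_eq mult.commute)
qed

lemma lyap_quad_M_scale:
  fixes xs x xm :: "'a::real_inner" and ls l lm :: "'b::real_inner"
  assumes "\<gamma> > 0" "\<delta> > 0"
  shows "lyap_quad \<eta> t (M_scale \<gamma> \<delta> xs ls) (M_scale \<gamma> \<delta> x l) (M_scale \<gamma> \<delta> xm lm)
    = lyap_quad \<eta> t xs x xm / \<gamma> + lyap_quad \<eta> t ls l lm / \<delta>"
  unfolding lyap_quad_def M_scale_diff M_scale_scaleR M_scale_add power2_norm_M_scale[OF assms]
  using assms by (simp add: field_simps)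

lemma norm_le_of_convex_recurrence:
  fixes u v :: "nat \<Rightarrow> 'a::real_normed_vector"
  assumes rec: "\<And>k. k \<ge> m \<Longrightarrow> u (Suc k) = q k *\<^sub>R u k + (1 - q k) *\<^sub>R v k"
    and q: "\<And>k. k \<ge> m \<Longrightarrow> 0 \<le> q k \<and> q k \<le> 1"
    and v: "\<And>k. k \<ge> m \<Longrightarrow> norm (v k) \<le> B" and u: "norm (u m) \<le> B"
    and "m \<le> k"
  shows "norm (u k) \<le> B"
  using \<open>m \<le> k\<close>
proof (induction k rule: dec_induct)
  case (step k)
  have "norm (u (Suc k)) \<le> q k * norm (u k) + (1 - q k) * norm (v k)"
    using rec[OF step.hyps(1)] q[OF step.hyps(1)] norm_triangle_ineq[of "q k *\<^sub>R u k" "(1 - q k) *\<^sub>R v k"]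
    by simp
  also have "\<dots> \<le> q k * B + (1 - q k) * B"
    using q[OF step.hyps(1)] step.IH v[OF step.hyps(1)] by (intro add_mono mult_left_mono) auto
  finally show ?case by (simp add: algebra_simps)
qed (use u in simp)

lemma aug_lag_multiplier_shift:
  "aug_lag f A b \<beta> y \<mu> = aug_lag f A b \<beta> y \<nu> + (\<mu> - \<nu>) \<bullet> (A *v y - b)"
  by (simp add: aug_lag_def inner_diff_left)

text \<open>The analysis uses the \<open>x\<close>-update only through the proximal inequality \<open>prox\<close>,
  which both the exact and the linearised subproblem satisfy.\<close>
locale accelerated_alm =
  fixes f :: "real^'n \<Rightarrow> real" and g :: "real^'n \<Rightarrow> real^'n"
    and A :: "real^'n^'m" and b :: "real^'m"
    and t :: "nat \<Rightarrow> real" and \<rho> \<eta> \<gamma> \<delta> \<beta> :: real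
    and x :: "nat \<Rightarrow> real^'n" and l :: "nat \<Rightarrow> real^'m"
    and xs :: "real^'n" and ls :: "real^'m"
  assumes f_convex: "convex_on UNIV f"
    and f_grad: "\<And>y. GDERIV f y :> g y"
    and KKT: "(xs, ls) \<in> KKT_set g A b"
    and t1: "t 1 = 1"
    and t_mono: "\<And>k. k \<ge> 1 \<Longrightarrow> t k \<le> t (Suc k)"
    and t_rate: "\<And>k. k \<ge> 1 \<Longrightarrow> (t (Suc k))\<^sup>2 - (t k)\<^sup>2 \<le> \<rho> * t (Suc k)"
    and rho_pos: "0 < \<rho>" and eta: "\<rho> \<le> \<eta>" "\<eta> \<le> 1"
    and gamma_pos: "\<gamma> > 0" and delta_pos: "\<delta> > 0" and beta_nonneg: "\<beta> \<ge> 0"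
    and init: "x 0 = x 1" "l 0 = l 1"
    and l_update: "\<And>k. k \<ge> 1 \<Longrightarrow>
      l (Suc k) = extrap t l k + \<delta> *\<^sub>R (c_k t \<eta> k *\<^sub>R (A *v x (Suc k)) - r_k t \<eta> A b x k)"
    and prox: "\<And>k y. k \<ge> 1 \<Longrightarrow>
      aug_lag f A b \<beta> (x (Suc k)) ((t (Suc k) / \<eta>) *\<^sub>R l (Suc k) - ((t (Suc k) - \<eta>) / \<eta>) *\<^sub>R l k)
        + (norm (y - x (Suc k)))\<^sup>2 / (2 * \<gamma>)
      \<le> aug_lag f A b \<beta> y ((t (Suc k) / \<eta>) *\<^sub>R l (Suc k) - ((t (Suc k) - \<eta>) / \<eta>) *\<^sub>R l k)
        + (norm (y - extrap t x k))\<^sup>2 / (2 * \<gamma>)"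
begin

lemma eta_pos: "\<eta> > 0"
  using rho_pos eta by linarith

lemma t_ge_1: "k \<ge> 1 \<Longrightarrow> t k \<ge> 1"
proof (induction k rule: dec_induct)
  case (step k)
  then show ?case using t_mono[of k] by linarith
qed (metis One_nat_def order_refl t1)

lemma feasible: "A *v xs = b"
  using KKT by (simp add: KKT_set_def)

definition multiplier :: "nat \<Rightarrow> real^'m" where
  "multiplier k = (t (Suc k) / \<eta>) *\<^sub>R l (Suc k) - ((t (Suc k) - \<eta>) / \<eta>) *\<^sub>R l k"

lemma prox_multiplier:
  "k \<ge> 1 \<Longrightarrow> aug_lag f A b \<beta> (x (Suc k)) (multiplier k) + (norm (y - x (Suc k)))\<^sup>2 / (2 * \<gamma>)
    \<le> aug_lag f A b \<beta> y (multiplier k) + (norm (y - extrap t x k))\<^sup>2 / (2 * \<gamma>)"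
  unfolding multiplier_def by (rule prox)

definition gap :: "real^'n \<Rightarrow> real" where
  "gap y = aug_lag f A b \<beta> y ls - aug_lag f A b \<beta> xs ls"

lemma gap_eq: "gap y = f y - f xs + ls \<bullet> (A *v y - b) + \<beta> / 2 * (norm (A *v y - b))\<^sup>2"
  by (simp add: gap_def aug_lag_def feasible)

lemma gap_nonneg: "gap y \<ge> 0"
proof -
  have "g xs = - (transpose A *v ls)"
    using KKT by (simp add: KKT_set_def eq_neg_iff_add_eq_0)
  then have "g xs \<bullet> (y - xs) = - (ls \<bullet> (A *v y - b))"
  proof -
    have "(ls v* A) \<bullet> (y - xs) = ls \<bullet> (A *v (y - xs))" by (simp add: dot_lmul_matrix)
    then show ?thesis using \<open>g xs = - (transpose A *v ls)\<close> by (simp add: matrix_vector_mult_diff_distrib feasible)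
  qed
  moreover have "f xs + g xs \<bullet> (y - xs) \<le> f y"
    by (rule convex_on_gradient_ineq[OF f_convex f_grad])
  ultimately show ?thesis
    unfolding gap_eq using beta_nonneg by (simp add: add_nonneg_nonneg)
qed

definition z :: "nat \<Rightarrow> (real^'n) \<times> (real^'m)" where
  "z k = M_scale \<gamma> \<delta> (x k) (l k)"

definition zs :: "(real^'n) \<times> (real^'m)" where
  "zs = M_scale \<gamma> \<delta> xs ls"

definition energy :: "nat \<Rightarrow> real" where
  "energy k = (t k)\<^sup>2 * gap (x k) + lyap_quad \<eta> (t k) zs (z k) (z (k - 1)) / 2"

definition E1 :: real where
  "E1 = aug_lag f A b \<beta> (x 1) ls - aug_lag f A b \<beta> xs ls
    + \<eta> / (2 * \<gamma>) * (norm (x 1 - xs))\<^sup>2 + \<eta> / (2 * \<delta>) * (norm (l 1 - ls))\<^sup>2"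

lemma energy_one: "energy 1 = E1"
  unfolding energy_def t1 lyap_quad_one z_def zs_def M_scale_diff power2_norm_M_scale[OF gamma_pos delta_pos]
  using gamma_pos delta_pos by (simp add: E1_def gap_def field_simps)

lemma energy_eq:
  "energy k = (t k)\<^sup>2 * gap (x k)
    + (lyap_quad \<eta> (t k) xs (x k) (x (k - 1)) / \<gamma> + lyap_quad \<eta> (t k) ls (l k) (l (k - 1)) / \<delta>) / 2"
  unfolding energy_def z_def zs_def lyap_quad_M_scale[OF gamma_pos delta_pos] ..

lemma residual_recursion:
  assumes "k \<ge> 1"
  shows "(t (Suc k))\<^sup>2 *\<^sub>R (A *v x (Suc k) - b) - ((t (Suc k))\<^sup>2 - \<eta> * t (Suc k)) *\<^sub>R (A *v x k - b)
    = (\<eta> / \<delta>) *\<^sub>R (t (Suc k) *\<^sub>R (l (Suc k) - l k) - (t k - 1) *\<^sub>R (l k - l (k - 1)))"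
proof -
  have upd: "l (Suc k) $ i = (l k + ((t k - 1) / t (Suc k)) *\<^sub>R (l k - l (k - 1))
      + \<delta> *\<^sub>R ((t (Suc k) / \<eta>) *\<^sub>R (A *v x (Suc k)) - (((t (Suc k) - \<eta>) / \<eta>) *\<^sub>R (A *v x k) + b))) $ i" for i
    using l_update[OF assms] by (simp add: extrap_def c_k_def r_k_def alpha_k_def)
  have "t (Suc k) \<noteq> 0" using t_ge_1[of "Suc k"] by simp
  then show ?thesis
    using eta_pos delta_pos by (simp add: vec_eq_iff upd field_simps power2_eq_square)
qed

lemma primal_descent:
  fixes k :: nat
  defines "T \<equiv> t (Suc k)"
  assumes "k \<ge> 1"
  shows "T\<^sup>2 * gap (x (Suc k)) + T\<^sup>2 * ((multiplier k - ls) \<bullet> (A *v x (Suc k) - b))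
      + lyap_quad \<eta> T xs (x (Suc k)) (x k) / (2 * \<gamma>) + (1 - \<eta>) * (2 * T - 1) * (norm (x (Suc k) - x k))\<^sup>2 / (2 * \<gamma>)
    \<le> (T\<^sup>2 - \<eta> * T) * gap (x k) + (T\<^sup>2 - \<eta> * T) * ((multiplier k - ls) \<bullet> (A *v x k - b))
      + lyap_quad \<eta> (t k) xs (x k) (x (k - 1)) / (2 * \<gamma>)"
proof -
  define w where "w = T\<^sup>2 - \<eta> * T"
  define q where "q = 1 / (2 * \<gamma>)"
  define xb where "xb = extrap t x k"
  define M where "M y = (multiplier k - ls) \<bullet> (A *v y - b)" for y
  have T: "T \<ge> 1" using t_ge_1[of "Suc k"] by (simp add: T_def)
  have weights: "0 \<le> w" "0 \<le> \<eta> * T"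
    using T eta eta_pos by (auto simp: w_def power2_eq_square intro!: mult_right_mono)
  have div: "u / (2 * \<gamma>) = q * u" for u by (simp add: q_def)
  have shift: "aug_lag f A b \<beta> y (multiplier k) = gap y + aug_lag f A b \<beta> xs ls + M y" for y
    by (simp add: aug_lag_multiplier_shift gap_def M_def)
  have at_x: "gap (x (Suc k)) + M (x (Suc k)) + q * (norm (x k - x (Suc k)))\<^sup>2 \<le> gap (x k) + M (x k) + q * (norm (x k - xb))\<^sup>2"
    using prox_multiplier[OF assms(2), of "x k"] by (simp add: shift div xb_def)
  have at_xs: "gap (x (Suc k)) + M (x (Suc k)) + q * (norm (xs - x (Suc k)))\<^sup>2 \<le> q * (norm (xs - xb))\<^sup>2"
    using prox_multiplier[OF assms(2), of xs] by (simp add: shift div xb_def M_def gap_def feasible)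
  have weighted:
    "w * (gap (x (Suc k)) + M (x (Suc k)) + q * (norm (x k - x (Suc k)))\<^sup>2)
      + \<eta> * T * (gap (x (Suc k)) + M (x (Suc k)) + q * (norm (xs - x (Suc k)))\<^sup>2)
    \<le> w * (gap (x k) + M (x k) + q * (norm (x k - xb))\<^sup>2) + \<eta> * T * (q * (norm (xs - xb))\<^sup>2)"
    using add_mono[OF mult_left_mono[OF at_x weights(1)] mult_left_mono[OF at_xs weights(2)]] .
  have "xb = x k + ((t k - 1) / T) *\<^sub>R (x k - x (k - 1))" by (simp add: xb_def T_def extrap_def)
  from extrapolation_prox_identity[OF this, of \<eta> "x (Suc k)" xs] T
  have "q * (w * ((norm (x k - xb))\<^sup>2 - (norm (x k - x (Suc k)))\<^sup>2) + \<eta> * T * ((norm (xs - xb))\<^sup>2 - (norm (xs - x (Suc k)))\<^sup>2))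
    = q * (lyap_quad \<eta> (t k) xs (x k) (x (k - 1)) - lyap_quad \<eta> T xs (x (Suc k)) (x k)
      - (1 - \<eta>) * (2 * T - 1) * (norm (x (Suc k) - x k))\<^sup>2)"
    by (simp add: w_def)
  with weighted show ?thesis
    unfolding div M_def[symmetric] w_def by (simp add: algebra_simps power2_eq_square)
qed

lemma dual_descent:
  fixes k :: nat
  defines "T \<equiv> t (Suc k)"
  assumes "k \<ge> 1"
  shows "(1 - \<eta>) * (2 * T - 1) * (norm (l (Suc k) - l k))\<^sup>2 / (2 * \<delta>)
      + lyap_quad \<eta> T ls (l (Suc k)) (l k) / (2 * \<delta>) - lyap_quad \<eta> (t k) ls (l k) (l (k - 1)) / (2 * \<delta>)
    \<le> T\<^sup>2 * ((multiplier k - ls) \<bullet> (A *v x (Suc k) - b))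
      - (T\<^sup>2 - \<eta> * T) * ((multiplier k - ls) \<bullet> (A *v x k - b))"
proof -
  define v where "v = multiplier k - ls"
  define u where "u = T *\<^sub>R (l (Suc k) - l k) - (t k - 1) *\<^sub>R (l k - l (k - 1))"
  have "\<eta> *\<^sub>R v = \<eta> *\<^sub>R (l k - ls) + T *\<^sub>R (l (Suc k) - l k)"
    using eta_pos by (simp add: v_def multiplier_def T_def vec_eq_iff field_simps)
  have "2 * \<delta> * (T\<^sup>2 * (v \<bullet> (A *v x (Suc k) - b)) - (T\<^sup>2 - \<eta> * T) * (v \<bullet> (A *v x k - b)))
      = 2 * \<delta> * (v \<bullet> (T\<^sup>2 *\<^sub>R (A *v x (Suc k) - b) - (T\<^sup>2 - \<eta> * T) *\<^sub>R (A *v x k - b)))"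
    by (simp add: inner_diff_right)
  also have "\<dots> = 2 * \<delta> * (v \<bullet> ((\<eta> / \<delta>) *\<^sub>R u))"
    unfolding T_def u_def residual_recursion[OF assms(2)] ..
  also have "\<dots> = 2 * ((\<eta> *\<^sub>R v) \<bullet> u)"
    using delta_pos by simp
  also have "\<dots> = 2 * ((\<eta> *\<^sub>R (l k - ls) + T *\<^sub>R (l (Suc k) - l k)) \<bullet> u)"
    unfolding \<open>\<eta> *\<^sub>R v = _\<close> ..
  also have "\<dots> = (norm u)\<^sup>2 + (1 - \<eta>) * (2 * T - 1) * (norm (l (Suc k) - l k))\<^sup>2
      + lyap_quad \<eta> T ls (l (Suc k)) (l k) - lyap_quad \<eta> (t k) ls (l k) (l (k - 1))"
    unfolding u_def by (rule inner_momentum_eq_lyap_quad_diff)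
  finally have "(1 - \<eta>) * (2 * T - 1) * (norm (l (Suc k) - l k))\<^sup>2
      + lyap_quad \<eta> T ls (l (Suc k)) (l k) - lyap_quad \<eta> (t k) ls (l k) (l (k - 1))
    \<le> 2 * \<delta> * (T\<^sup>2 * (v \<bullet> (A *v x (Suc k) - b)) - (T\<^sup>2 - \<eta> * T) * (v \<bullet> (A *v x k - b)))"
    by simp
  then show ?thesis
    using delta_pos unfolding v_def
    by (simp add: pos_divide_le_eq mult.commute add_divide_distrib[symmetric] diff_divide_distrib[symmetric])
qed

lemma energy_decrease:
  assumes "k \<ge> 1"
  shows "energy (Suc k) + (\<eta> - \<rho>) * t (Suc k) * gap (x k)
      + (1 - \<eta>) * t (Suc k) / 2 * (M_norm \<gamma> \<delta> (x (Suc k) - x k) (l (Suc k) - l k))\<^sup>2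
    \<le> energy k"
proof -
  define T where "T = t (Suc k)"
  define Nx Nl where "Nx = (norm (x (Suc k) - x k))\<^sup>2" and "Nl = (norm (l (Suc k) - l k))\<^sup>2"
  define Qx Ql where "Qx = lyap_quad \<eta> T xs (x (Suc k)) (x k)" and "Ql = lyap_quad \<eta> T ls (l (Suc k)) (l k)"
  define Qx0 Ql0 where "Qx0 = lyap_quad \<eta> (t k) xs (x k) (x (k - 1))"
    and "Ql0 = lyap_quad \<eta> (t k) ls (l k) (l (k - 1))"
  have T: "T \<ge> 1" using t_ge_1[of "Suc k"] by (simp add: T_def)
  have slack: "(1 - \<eta>) * T * N \<le> (1 - \<eta>) * (2 * T - 1) * N" if "N \<ge> 0" for N
    using T eta that by (intro mult_right_mono mult_left_mono) auto
  have "energy (Suc k) + (\<eta> - \<rho>) * T * gap (x k) + (1 - \<eta>) * T / 2 * (M_norm \<gamma> \<delta> (x (Suc k) - x k) (l (Suc k) - l k))\<^sup>2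
      = T\<^sup>2 * gap (x (Suc k)) + Qx / (2 * \<gamma>) + Ql / (2 * \<delta>) + (\<eta> - \<rho>) * T * gap (x k)
        + (1 - \<eta>) * T * Nx / (2 * \<gamma>) + (1 - \<eta>) * T * Nl / (2 * \<delta>)"
    unfolding energy_eq norm_M_scale[OF gamma_pos delta_pos, symmetric] power2_norm_M_scale[OF gamma_pos delta_pos]
    using gamma_pos delta_pos by (simp add: T_def Qx_def Ql_def Nx_def Nl_def field_simps)
  also have "\<dots> \<le> T\<^sup>2 * gap (x (Suc k)) + Qx / (2 * \<gamma>) + Ql / (2 * \<delta>) + (\<eta> - \<rho>) * T * gap (x k)
        + (1 - \<eta>) * (2 * T - 1) * Nx / (2 * \<gamma>) + (1 - \<eta>) * (2 * T - 1) * Nl / (2 * \<delta>)"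
    using slack[of Nx] slack[of Nl] gamma_pos delta_pos
    by (intro add_mono divide_right_mono order_refl) (auto simp: Nx_def Nl_def)
  also have "\<dots> \<le> (T\<^sup>2 - \<eta> * T) * gap (x k) + (\<eta> - \<rho>) * T * gap (x k) + Qx0 / (2 * \<gamma>) + Ql0 / (2 * \<delta>)"
    using primal_descent[OF assms] dual_descent[OF assms]
    unfolding T_def[symmetric] Nx_def[symmetric] Nl_def[symmetric] Qx_def[symmetric] Ql_def[symmetric]
      Qx0_def[symmetric] Ql0_def[symmetric] by linarith
  also have "\<dots> \<le> (t k)\<^sup>2 * gap (x k) + Qx0 / (2 * \<gamma>) + Ql0 / (2 * \<delta>)"
  proof -
    have "(T\<^sup>2 - \<eta> * T) + (\<eta> - \<rho>) * T \<le> (t k)\<^sup>2"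
      using t_rate[OF assms] by (simp add: T_def algebra_simps)
    from mult_right_mono[OF this gap_nonneg[of "x k"]] show ?thesis by (simp add: algebra_simps)
  qed
  also have "\<dots> = energy k"
    unfolding energy_eq Qx0_def Ql0_def by (simp add: field_simps)
  finally show ?thesis unfolding T_def .
qed

lemma lyap_quad_z_nonneg: "lyap_quad \<eta> \<tau> zs (z k) (z j) \<ge> 0"
  using eta eta_pos by (intro lyap_quad_nonneg) auto

lemma energy_nonneg: "energy k \<ge> 0"
  unfolding energy_def using gap_nonneg[of "x k"] lyap_quad_z_nonneg by simp

lemma E1_nonneg: "E1 \<ge> 0"
  using energy_nonneg energy_one by metis

definition dissipation :: "nat \<Rightarrow> real" where
  "dissipation k = (\<eta> - \<rho>) * t (Suc k) * gap (x k)
    + (1 - \<eta>) * t (Suc k) / 2 * (M_norm \<gamma> \<delta> (x (Suc k) - x k) (l (Suc k) - l k))\<^sup>2"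

lemma dissipation_nonneg: "dissipation k \<ge> 0"
  using t_ge_1[of "Suc k"] eta gap_nonneg[of "x k"] unfolding dissipation_def
  by (intro add_nonneg_nonneg mult_nonneg_nonneg) auto

lemma energy_le_E1: "k \<ge> 1 \<Longrightarrow> energy k \<le> E1"
proof (induction k rule: dec_induct)
  case (step k)
  then show ?case using energy_decrease[OF step.hyps(1)] dissipation_nonneg[of k]
    unfolding dissipation_def by linarith
qed (metis energy_one order_refl)

lemma sum_dissipation_le: "(\<Sum>i<n. dissipation (Suc i)) \<le> E1"
proof -
  have "(\<Sum>i<n. dissipation (Suc i)) \<le> energy 1 - energy (Suc n)"
  proof (induction n)
    case (Suc n)
    then show ?case using energy_decrease[of "Suc n"] unfolding dissipation_def by simp
  qed simp
  then show ?thesis using energy_nonneg[of "Suc n"] energy_one by linarith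
qed

lemma summable_gap:
  "summable (\<lambda>k. (\<eta> - \<rho>) * t (k + 2) * (aug_lag f A b \<beta> (x (k + 1)) ls - aug_lag f A b \<beta> xs ls))"
  (is "summable ?a")
proof (rule summableI_nonneg_bounded)
  show "0 \<le> ?a k" for k
    using t_ge_1[of "k + 2"] eta gap_nonneg[of "x (k + 1)"] by (simp add: gap_def)
  have "?a k \<le> dissipation (Suc k)" for k
    using t_ge_1[of "Suc (Suc k)"] eta unfolding dissipation_def gap_def[symmetric] by simp
  then have "(\<Sum>k<n. ?a k) \<le> (\<Sum>k<n. dissipation (Suc k))" for n
    by (intro sum_mono)
  then show "(\<Sum>k<n. ?a k) \<le> E1" for n
    using sum_dissipation_le[of n] by (meson order_trans)
qed

lemma summable_M_norm_step:
  "summable (\<lambda>k. (1 - \<eta>) * t (k + 2) * (M_norm \<gamma> \<delta> (x (k + 2) - x (k + 1)) (l (k + 2) - l (k + 1)))\<^sup>2)"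
  (is "summable ?a")
proof (rule summableI_nonneg_bounded)
  show "0 \<le> ?a k" for k
    using t_ge_1[of "k + 2"] eta by simp
  have "?a k \<le> 2 * dissipation (Suc k)" for k
    using t_ge_1[of "Suc (Suc k)"] eta gap_nonneg[of "x (Suc k)"] unfolding dissipation_def by simp
  then have "(\<Sum>k<n. ?a k) \<le> 2 * (\<Sum>k<n. dissipation (Suc k))" for n
    by (simp add: sum_distrib_left sum_mono)
  then show "(\<Sum>k<n. ?a k) \<le> 2 * E1" for n
    using sum_dissipation_le[of n] by (meson order_trans mult_left_mono zero_le_numeral)
qed

lemma gap_rate:
  assumes "k \<ge> 1"
  shows "aug_lag f A b \<beta> (x k) ls - aug_lag f A b \<beta> xs ls \<le> E1 / (t k)\<^sup>2"
proof -
  have "(t k)\<^sup>2 * gap (x k) \<le> E1"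
    using energy_le_E1[OF assms] lyap_quad_z_nonneg[of "t k" k "k - 1"] unfolding energy_def by linarith
  moreover have "(t k)\<^sup>2 > 0" using t_ge_1[OF assms] by simp
  ultimately show ?thesis by (simp add: gap_def[symmetric] pos_le_divide_eq mult.commute)
qed

definition momentum :: "nat \<Rightarrow> (real^'n) \<times> (real^'m)" where
  "momentum k = \<eta> *\<^sub>R (z k - zs) + (t k - 1) *\<^sub>R (z k - z (k - 1))"

lemma norm_momentum_le: "k \<ge> 1 \<Longrightarrow> norm (momentum k) \<le> sqrt (2 * E1)"
proof -
  assume k: "k \<ge> 1"
  have "(norm (momentum k))\<^sup>2 \<le> lyap_quad \<eta> (t k) zs (z k) (z (k - 1))"
    unfolding momentum_def lyap_quad_def using eta eta_pos by simp
  also have "\<dots> \<le> 2 * energy k"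
    unfolding energy_def using gap_nonneg[of "x k"] by simp
  also have "\<dots> \<le> 2 * E1"
    using energy_le_E1[OF k] by simp
  finally show ?thesis by (rule real_le_rsqrt)
qed

lemma z_recurrence:
  fixes k :: nat
  defines "q \<equiv> (t (Suc k) - 1) / (t (Suc k) - 1 + \<eta>)"
  shows "z (Suc k) - zs = q *\<^sub>R (z k - zs) + (1 - q) *\<^sub>R ((1 / \<eta>) *\<^sub>R momentum (Suc k))"
    and "0 \<le> q" "q \<le> 1"
proof -
  define D where "D = t (Suc k) - 1 + \<eta>"
  have D: "D > 0" using t_ge_1[of "Suc k"] eta_pos by (simp add: D_def)
  have q: "q = (t (Suc k) - 1) / D" by (simp add: q_def D_def)
  have "1 - q = (D - (t (Suc k) - 1)) / D" using D by (simp add: q diff_divide_distrib)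
  also have "D - (t (Suc k) - 1) = \<eta>" by (simp add: D_def)
  finally have one_minus_q: "1 - q = \<eta> / D" .
  show "0 \<le> q" "q \<le> 1" using q D t_ge_1[of "Suc k"] eta_pos by (auto simp: D_def)
  have "D *\<^sub>R (z (Suc k) - zs) = (t (Suc k) - 1) *\<^sub>R (z k - zs) + momentum (Suc k)"
    unfolding momentum_def D_def by (simp add: algebra_simps)
  then have "z (Suc k) - zs = (1 / D) *\<^sub>R ((t (Suc k) - 1) *\<^sub>R (z k - zs) + momentum (Suc k))"
    using D by (simp add: \<open>D *\<^sub>R _ = _\<close>[symmetric])
  then show "z (Suc k) - zs = q *\<^sub>R (z k - zs) + (1 - q) *\<^sub>R ((1 / \<eta>) *\<^sub>R momentum (Suc k))"
    using eta_pos unfolding one_minus_q by (simp add: q scaleR_add_right)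
qed

text \<open>By \<open>z_recurrence\<close>, \<open>z (k + 1) - zs\<close> is a convex combination of \<open>z k - zs\<close> and
  \<open>momentum (k + 1) / \<eta>\<close>, both of which stay in the ball of radius \<open>sqrt (2 E1) / \<eta>\<close>.\<close>
lemma norm_z_diff_zs_le: "norm (z k - zs) \<le> sqrt (2 * E1) / \<eta>"
proof -
  have base: "norm (z 1 - zs) \<le> sqrt (2 * E1) / \<eta>"
  proof -
    have "momentum 1 = \<eta> *\<^sub>R (z 1 - zs)" unfolding momentum_def t1 by simp
    then show ?thesis
      using norm_momentum_le[of 1] eta_pos by (simp add: pos_le_divide_eq mult.commute)
  qed
  have "norm (z k - zs) \<le> sqrt (2 * E1) / \<eta>" if "k \<ge> 1"
  proof (rule norm_le_of_convex_recurrence[where u = "\<lambda>k. z k - zs" and m = 1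
        and q = "\<lambda>k. (t (Suc k) - 1) / (t (Suc k) - 1 + \<eta>)" and v = "\<lambda>k. (1 / \<eta>) *\<^sub>R momentum (Suc k)"])
    show "norm ((1 / \<eta>) *\<^sub>R momentum (Suc k)) \<le> sqrt (2 * E1) / \<eta>" if "k \<ge> 1" for k
      using norm_momentum_le[of "Suc k"] eta_pos by (simp add: divide_right_mono)
  qed (use base that z_recurrence in auto)
  moreover have "z 0 = z 1" by (simp add: z_def init)
  ultimately show ?thesis using base by (cases "k = 0") auto
qed

lemma dist_iterate_le:
  "norm (x k - xs) \<le> sqrt \<gamma> * (sqrt (2 * E1) / \<eta>)" "norm (l k - ls) \<le> sqrt \<delta> * (sqrt (2 * E1) / \<eta>)"
proof -
  have z: "norm (M_scale \<gamma> \<delta> (x k - xs) (l k - ls)) \<le> sqrt (2 * E1) / \<eta>"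
    using norm_z_diff_zs_le[of k] by (simp add: z_def zs_def M_scale_diff)
  show "norm (x k - xs) \<le> sqrt \<gamma> * (sqrt (2 * E1) / \<eta>)"
    by (rule order_trans[OF norm_le_norm_M_scale(1)[OF gamma_pos delta_pos] mult_left_mono[OF z]]) (use gamma_pos in simp)
  show "norm (l k - ls) \<le> sqrt \<delta> * (sqrt (2 * E1) / \<eta>)"
    by (rule order_trans[OF norm_le_norm_M_scale(2)[OF gamma_pos delta_pos] mult_left_mono[OF z]]) (use delta_pos in simp)
qed

lemma norm_z_step_le: "k \<ge> 1 \<Longrightarrow> (t k - 1) * norm (z k - z (k - 1)) \<le> 2 * sqrt (2 * E1)"
proof -
  assume k: "k \<ge> 1"
  have "(t k - 1) * norm (z k - z (k - 1)) = norm (momentum k - \<eta> *\<^sub>R (z k - zs))"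
    using t_ge_1[OF k] by (simp add: momentum_def)
  also have "\<dots> \<le> norm (momentum k) + \<eta> * norm (z k - zs)"
    using norm_triangle_ineq4[of "momentum k" "\<eta> *\<^sub>R (z k - zs)"] eta_pos by simp
  also have "\<dots> \<le> sqrt (2 * E1) + \<eta> * (sqrt (2 * E1) / \<eta>)"
    using norm_momentum_le[OF k] norm_z_diff_zs_le[of k] eta_pos by (intro add_mono mult_left_mono) auto
  finally show ?thesis using eta_pos by simp
qed

lemma M_norm_step_le:
  assumes "t k > 1" "k > 1"
  shows "M_norm \<gamma> \<delta> (x k - x (k - 1)) (l k - l (k - 1)) \<le> 2 * sqrt (2 * E1) / (t k - 1)"
proof -
  have "M_norm \<gamma> \<delta> (x k - x (k - 1)) (l k - l (k - 1)) = norm (z k - z (k - 1))"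
    unfolding z_def M_scale_diff norm_M_scale[OF gamma_pos delta_pos] ..
  then show ?thesis using norm_z_step_le[of k] assms by (simp add: pos_le_divide_eq mult.commute)
qed

lemma iterates_bounded: "bounded (range (\<lambda>k. (x k, l k)))"
proof -
  have "norm (x k, l k) \<le> (norm xs + sqrt \<gamma> * (sqrt (2 * E1) / \<eta>)) + (norm ls + sqrt \<delta> * (sqrt (2 * E1) / \<eta>))" for k
    using norm_Pair_le[of "x k" "l k"] norm_triangle_sub[of "x k" xs] norm_triangle_sub[of "l k" ls]
      dist_iterate_le[of k] by linarith
  then show ?thesis unfolding bounded_iff by blast
qed

definition dual_momentum :: "nat \<Rightarrow> real^'m" where
  "dual_momentum k = (t k - 1) *\<^sub>R (l k - l (k - 1)) + l k"

lemma dual_momentum_bounded: "\<exists>B. \<forall>k\<ge>1. norm (dual_momentum k) \<le> B"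
proof (intro exI allI impI)
  define R where "R = sqrt (2 * E1)"
  fix k :: nat assume k: "k \<ge> 1"
  have "(t k - 1) * norm (l k - l (k - 1)) \<le> (t k - 1) * (sqrt \<delta> * norm (z k - z (k - 1)))"
    using norm_le_norm_M_scale(2)[OF gamma_pos delta_pos, where a = "x k - x (k - 1)" and c = "l k - l (k - 1)"]
      t_ge_1[OF k] by (intro mult_left_mono) (auto simp: z_def M_scale_diff)
  also have "\<dots> \<le> sqrt \<delta> * (2 * R)"
    using mult_left_mono[OF norm_z_step_le[OF k], of "sqrt \<delta>"] delta_pos by (simp add: R_def mult.left_commute)
  finally have "norm ((t k - 1) *\<^sub>R (l k - l (k - 1))) \<le> sqrt \<delta> * (2 * R)"
    using t_ge_1[OF k] by simp
  moreover have "norm (l k - ls) \<le> sqrt \<delta> * (R / \<eta>)"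
    using dist_iterate_le(2) by (simp add: R_def)
  ultimately show "norm (dual_momentum k) \<le> sqrt \<delta> * (2 * R) + (norm ls + sqrt \<delta> * (R / \<eta>))"
    unfolding dual_momentum_def using norm_triangle_ineq[of "(t k - 1) *\<^sub>R (l k - l (k - 1))" "l k"]
      norm_triangle_sub[of "l k" ls] by linarith
qed

definition residual_weight :: "nat \<Rightarrow> real" where
  "residual_weight k = ((t (Suc k))\<^sup>2 - \<eta> * t (Suc k)) / (t k)\<^sup>2"

lemma residual_weight_bounds:
  assumes "k \<ge> 1"
  shows "0 \<le> residual_weight k \<and> residual_weight k \<le> 1"
proof -
  have "t (Suc k) \<ge> 1" using t_ge_1[of "Suc k"] by simp
  then have "\<eta> * t (Suc k) \<le> t (Suc k) * t (Suc k)" "\<rho> * t (Suc k) \<le> \<eta> * t (Suc k)"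
    using eta by (auto intro!: mult_right_mono)
  then have "0 \<le> (t (Suc k))\<^sup>2 - \<eta> * t (Suc k)" "(t (Suc k))\<^sup>2 - \<eta> * t (Suc k) \<le> (t k)\<^sup>2"
    using t_rate[OF assms] by (simp_all add: power2_eq_square)
  moreover have "(t k)\<^sup>2 > 0" using t_ge_1[OF assms] by simp
  ultimately show ?thesis by (simp add: residual_weight_def pos_divide_le_eq)
qed

text \<open>With \<open>a k = t k\<^sup>2 (A x k - b)\<close>, the dual update gives
  \<open>a (k + 1) = residual_weight k a k + (\<eta> / \<delta>) (dual_momentum (k + 1) - dual_momentum k)\<close>, so
  \<open>a k - (\<eta> / \<delta>) dual_momentum k\<close> obeys a convex recurrence driven by the bounded
  dual momentum.\<close>
lemma scaled_residual_recursion: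
  fixes k :: nat
  defines "q \<equiv> residual_weight k" and "\<kappa> \<equiv> \<eta> / \<delta>"
  assumes "k \<ge> 1"
  shows "(t (Suc k))\<^sup>2 *\<^sub>R (A *v x (Suc k) - b) - \<kappa> *\<^sub>R dual_momentum (Suc k)
    = q *\<^sub>R ((t k)\<^sup>2 *\<^sub>R (A *v x k - b) - \<kappa> *\<^sub>R dual_momentum k) + (1 - q) *\<^sub>R (- (\<kappa> *\<^sub>R dual_momentum k))"
proof -
  define w where "w = (t (Suc k))\<^sup>2 - \<eta> * t (Suc k)"
  have "t (Suc k) *\<^sub>R (l (Suc k) - l k) - (t k - 1) *\<^sub>R (l k - l (k - 1))
      = dual_momentum (Suc k) - dual_momentum k"
    by (simp add: dual_momentum_def algebra_simps)
  then have "(t (Suc k))\<^sup>2 *\<^sub>R (A *v x (Suc k) - b) = w *\<^sub>R (A *v x k - b) + \<kappa> *\<^sub>R (dual_momentum (Suc k) - dual_momentum k)"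
    using residual_recursion[OF assms(3)] unfolding w_def \<kappa>_def by (simp add: diff_eq_eq)
  then have "(t (Suc k))\<^sup>2 *\<^sub>R (A *v x (Suc k) - b) - \<kappa> *\<^sub>R dual_momentum (Suc k)
      = w *\<^sub>R (A *v x k - b) - \<kappa> *\<^sub>R dual_momentum k"
    by (simp add: algebra_simps)
  also have "\<dots> = q *\<^sub>R ((t k)\<^sup>2 *\<^sub>R (A *v x k - b)) - \<kappa> *\<^sub>R dual_momentum k"
    using t_ge_1[OF assms(3)] by (simp add: q_def w_def residual_weight_def)
  also have "\<dots> = q *\<^sub>R ((t k)\<^sup>2 *\<^sub>R (A *v x k - b) - \<kappa> *\<^sub>R dual_momentum k) + (1 - q) *\<^sub>R (- (\<kappa> *\<^sub>R dual_momentum k))"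
    by (simp add: algebra_simps)
  finally show ?thesis .
qed

lemma residual_bound: "\<exists>C>0. \<forall>k\<ge>1. norm (A *v x k - b) \<le> C / (t k)\<^sup>2"
proof -
  obtain B where B: "\<And>k. k \<ge> 1 \<Longrightarrow> norm (dual_momentum k) \<le> B"
    using dual_momentum_bounded by blast
  define \<kappa> where "\<kappa> = \<eta> / \<delta>"
  define d where "d k = (t k)\<^sup>2 *\<^sub>R (A *v x k - b) - \<kappa> *\<^sub>R dual_momentum k" for k
  define D where "D = max (norm (d 1)) (\<kappa> * B)"
  define C where "C = D + \<kappa> * B + 1"
  have \<kappa>: "\<kappa> > 0" using eta_pos delta_pos by (simp add: \<kappa>_def)
  have "B \<ge> 0" using B[of 1] norm_ge_zero order_trans by blast
  have d_bound: "norm (d k) \<le> D" if "k \<ge> 1" for k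
  proof (rule norm_le_of_convex_recurrence[where u = d and m = 1 and q = residual_weight
        and v = "\<lambda>k. - (\<kappa> *\<^sub>R dual_momentum k)"])
    show "d (Suc k) = residual_weight k *\<^sub>R d k + (1 - residual_weight k) *\<^sub>R - (\<kappa> *\<^sub>R dual_momentum k)"
      if "k \<ge> 1" for k
      unfolding d_def \<kappa>_def by (rule scaled_residual_recursion[OF that])
    show "norm (- (\<kappa> *\<^sub>R dual_momentum k)) \<le> D" if "k \<ge> 1" for k
      using B[OF that] \<kappa> by (simp add: D_def le_max_iff_disj)
  qed (use that residual_weight_bounds in \<open>simp_all add: D_def\<close>)
  show ?thesis
  proof (intro exI conjI allI impI)
    show "C > 0" using \<open>B \<ge> 0\<close> \<kappa> by (simp add: C_def D_def add_nonneg_pos max.coboundedI1)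
    fix k :: nat assume k: "k \<ge> 1"
    have "(t k)\<^sup>2 * norm (A *v x k - b) = norm (d k + \<kappa> *\<^sub>R dual_momentum k)"
      by (simp add: d_def)
    also have "\<dots> \<le> D + \<kappa> * B"
    proof -
      have "\<kappa> * norm (dual_momentum k) \<le> \<kappa> * B" using B[OF k] \<kappa> by simp
      moreover have "norm (d k + \<kappa> *\<^sub>R dual_momentum k) \<le> norm (d k) + \<kappa> * norm (dual_momentum k)"
        using norm_triangle_ineq[of "d k" "\<kappa> *\<^sub>R dual_momentum k"] \<kappa> by simp
      ultimately show ?thesis using d_bound[OF k] by linarith
    qed
    finally show "norm (A *v x k - b) \<le> C / (t k)\<^sup>2"
      using t_ge_1[OF k] by (simp add: C_def pos_le_divide_eq mult.commute)
  qed
qed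

lemma objective_bound:
  assumes "k \<ge> 1" and res: "norm (A *v x k - b) \<le> C / (t k)\<^sup>2"
  shows "\<bar>f (x k) - f xs\<bar> \<le> (E1 + norm ls * C + \<beta> * C\<^sup>2 / 2) / (t k)\<^sup>2"
proof -
  define u where "u = 1 / (t k)\<^sup>2"
  define r where "r = A *v x k - b"
  have u: "0 < u" "u \<le> 1" using t_ge_1[OF assms(1)] by (auto simp: u_def power_le_one_iff)
  have r: "norm r \<le> C * u" using res by (simp add: r_def u_def)
  have "0 \<le> C * u" using r norm_ge_zero[of r] by linarith
  then have "C \<ge> 0" using u by (simp add: zero_le_mult_iff)
  have gap: "0 \<le> gap (x k)" "gap (x k) \<le> E1 * u"
    using gap_nonneg gap_rate[OF assms(1)] by (simp_all add: gap_def u_def)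
  have inner: "\<bar>ls \<bullet> r\<bar> \<le> norm ls * (C * u)"
    using Cauchy_Schwarz_ineq2[of ls r] mult_left_mono[OF r norm_ge_zero[of ls]] by linarith
  have "(norm r)\<^sup>2 \<le> (C * u)\<^sup>2" using r by (simp add: power_mono)
  also have "\<dots> = C\<^sup>2 * u * u" by (simp add: power2_eq_square)
  also have "\<dots> \<le> C\<^sup>2 * u * 1" using u by (intro mult_left_mono) auto
  finally have quad: "0 \<le> \<beta> / 2 * (norm r)\<^sup>2" "\<beta> / 2 * (norm r)\<^sup>2 \<le> \<beta> / 2 * (C\<^sup>2 * u)"
    using beta_nonneg by (auto intro: mult_left_mono)
  have "f (x k) - f xs = gap (x k) - ls \<bullet> r - \<beta> / 2 * (norm r)\<^sup>2"
    by (simp add: gap_eq r_def)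
  moreover have "0 \<le> E1 * u" "0 \<le> \<beta> / 2 * (C\<^sup>2 * u)"
    using E1_nonneg u beta_nonneg by simp_all
  ultimately have "\<bar>f (x k) - f xs\<bar> \<le> E1 * u + norm ls * (C * u) + \<beta> / 2 * (C\<^sup>2 * u)"
    using gap quad inner by (simp add: abs_le_iff)
  also have "\<dots> = (E1 + norm ls * C + \<beta> * C\<^sup>2 / 2) / (t k)\<^sup>2"
    using t_ge_1[OF assms(1)] by (simp add: u_def field_simps)
  finally show ?thesis .
qed

end

lemma sub_obj_multiplier_eq:
  assumes "l (Suc k) = extrap t l k + \<delta> *\<^sub>R (c_k t \<eta> k *\<^sub>R (A *v x (Suc k)) - r_k t \<eta> A b x k)"
  shows "p_k t \<eta> l k + (\<delta> * c_k t \<eta> k) *\<^sub>R (c_k t \<eta> k *\<^sub>R (A *v x (Suc k)) - r_k t \<eta> A b x k)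
    = (t (Suc k) / \<eta>) *\<^sub>R l (Suc k) - ((t (Suc k) - \<eta>) / \<eta>) *\<^sub>R l k"
proof -
  have "p_k t \<eta> l k + (\<delta> * c_k t \<eta> k) *\<^sub>R (c_k t \<eta> k *\<^sub>R (A *v x (Suc k)) - r_k t \<eta> A b x k)
      = c_k t \<eta> k *\<^sub>R (extrap t l k + \<delta> *\<^sub>R (c_k t \<eta> k *\<^sub>R (A *v x (Suc k)) - r_k t \<eta> A b x k))
        - alpha_k t \<eta> k *\<^sub>R l k"
    by (simp add: p_k_def algebra_simps)
  then show ?thesis unfolding assms[symmetric] by (simp add: c_k_def alpha_k_def)
qed

lemma sub_obj_update_prox_ineq:
  fixes f :: "real^'n \<Rightarrow> real" and A :: "real^'n^'m"
    and x :: "nat \<Rightarrow> real^'n" and l :: "nat \<Rightarrow> real^'m"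
  assumes f_convex: "convex_on UNIV f" and f_grad: "\<And>y. GDERIV f y :> g y"
    and params: "\<gamma> > 0" "\<delta> > 0" "\<beta> \<ge> 0"
    and x_update:
      "(\<forall>k\<ge>1. \<forall>y. sub_obj f A b \<beta> \<gamma> \<delta> (extrap t x k) (p_k t \<eta> l k) (c_k t \<eta> k) (r_k t \<eta> A b x k) (x (Suc k))
                 \<le> sub_obj f A b \<beta> \<gamma> \<delta> (extrap t x k) (p_k t \<eta> l k) (c_k t \<eta> k) (r_k t \<eta> A b x k) y)
       \<or> (\<exists>L>0. (\<forall>u v. norm (g u - g v) \<le> L * norm (u - v)) \<and> \<gamma> \<le> 1 / L \<and>
          (\<forall>k\<ge>1. \<forall>y.
             sub_obj (\<lambda>z. g (extrap t x k) \<bullet> z) A b \<beta> \<gamma> \<delta> (extrap t x k) (p_k t \<eta> l k) (c_k t \<eta> k) (r_k t \<eta> A b x k) (x (Suc k))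
             \<le> sub_obj (\<lambda>z. g (extrap t x k) \<bullet> z) A b \<beta> \<gamma> \<delta> (extrap t x k) (p_k t \<eta> l k) (c_k t \<eta> k) (r_k t \<eta> A b x k) y))"
    and l_update: "\<And>k. k \<ge> 1 \<Longrightarrow>
       l (Suc k) = extrap t l k + \<delta> *\<^sub>R (c_k t \<eta> k *\<^sub>R (A *v x (Suc k)) - r_k t \<eta> A b x k)"
    and k: "k \<ge> 1"
  shows "aug_lag f A b \<beta> (x (Suc k)) ((t (Suc k) / \<eta>) *\<^sub>R l (Suc k) - ((t (Suc k) - \<eta>) / \<eta>) *\<^sub>R l k)
        + (norm (y - x (Suc k)))\<^sup>2 / (2 * \<gamma>)
      \<le> aug_lag f A b \<beta> y ((t (Suc k) / \<eta>) *\<^sub>R l (Suc k) - ((t (Suc k) - \<eta>) / \<eta>) *\<^sub>R l k)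
        + (norm (y - extrap t x k))\<^sup>2 / (2 * \<gamma>)"
  using x_update
proof (elim disjE exE conjE)
  note multiplier = sub_obj_multiplier_eq[OF l_update[OF k]]
  assume "\<forall>k\<ge>1. \<forall>y. sub_obj f A b \<beta> \<gamma> \<delta> (extrap t x k) (p_k t \<eta> l k) (c_k t \<eta> k) (r_k t \<eta> A b x k) (x (Suc k))
    \<le> sub_obj f A b \<beta> \<gamma> \<delta> (extrap t x k) (p_k t \<eta> l k) (c_k t \<eta> k) (r_k t \<eta> A b x k) y"
  from sub_obj_argmin_prox_ineq[OF f_convex params(3,1) less_imp_le[OF params(2)] this[rule_format, OF k]]
  show ?thesis unfolding multiplier .
next
  note multiplier = sub_obj_multiplier_eq[OF l_update[OF k]]
  fix L assume "L > 0" "\<forall>u v. norm (g u - g v) \<le> L * norm (u - v)" "\<gamma> \<le> 1 / L"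
    "\<forall>k\<ge>1. \<forall>y. sub_obj (\<lambda>z. g (extrap t x k) \<bullet> z) A b \<beta> \<gamma> \<delta> (extrap t x k) (p_k t \<eta> l k) (c_k t \<eta> k) (r_k t \<eta> A b x k) (x (Suc k))
      \<le> sub_obj (\<lambda>z. g (extrap t x k) \<bullet> z) A b \<beta> \<gamma> \<delta> (extrap t x k) (p_k t \<eta> l k) (c_k t \<eta> k) (r_k t \<eta> A b x k) y"
  from linearized_sub_obj_argmin_prox_ineq[OF f_convex f_grad this(2)[rule_format] this(1,3) params(3,1)
      less_imp_le[OF params(2)] this(4)[rule_format, OF k]]
  show ?thesis unfolding multiplier .
qed

theorem theorem4p1:
  fixes f :: "real^'n \<Rightarrow> real" and g :: "real^'n \<Rightarrow> real^'n"
    and A :: "real^'n^'m" and b :: "real^'m"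
    and t :: "nat \<Rightarrow> real" and \<rho> \<eta> \<gamma> \<delta> \<beta> :: real
    and x :: "nat \<Rightarrow> real^'n" and l :: "nat \<Rightarrow> real^'m"
    and xs :: "real^'n" and ls :: "real^'m"
  assumes f_convex: "convex_on UNIV f"
    and f_grad: "\<And>y. GDERIV f y :> g y"
    and g_cont: "continuous_on UNIV g"
    and Omega_ne: "KKT_set g A b \<noteq> {}"
    and t1: "t 1 = 1"
    and t_mono: "\<And>k. k \<ge> 1 \<Longrightarrow> t k \<le> t (Suc k)"
    and t_gt: "\<And>k. k > 2 \<Longrightarrow> t k > 1"
    and t_lim: "filterlim t at_top sequentially"
    and t_rate: "\<And>k. k \<ge> 1 \<Longrightarrow> (t (Suc k))\<^sup>2 - (t k)\<^sup>2 \<le> \<rho> * t (Suc k)"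
    and rho: "0 < \<rho>" "\<rho> \<le> 1"
    and eta: "\<rho> \<le> \<eta>" "\<eta> \<le> 1"
    and params: "\<gamma> > 0" "\<delta> > 0" "\<beta> \<ge> 0"
    and init: "x 0 = x 1" "l 0 = l 1"
    and x_update:
      "(\<forall>k\<ge>1. \<forall>y. sub_obj f A b \<beta> \<gamma> \<delta> (extrap t x k) (p_k t \<eta> l k) (c_k t \<eta> k) (r_k t \<eta> A b x k) (x (Suc k))
                 \<le> sub_obj f A b \<beta> \<gamma> \<delta> (extrap t x k) (p_k t \<eta> l k) (c_k t \<eta> k) (r_k t \<eta> A b x k) y)
       \<or> (\<exists>L>0. (\<forall>u v. norm (g u - g v) \<le> L * norm (u - v)) \<and> \<gamma> \<le> 1 / L \<and>
          (\<forall>k\<ge>1. \<forall>y.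
             sub_obj (\<lambda>z. g (extrap t x k) \<bullet> z) A b \<beta> \<gamma> \<delta> (extrap t x k) (p_k t \<eta> l k) (c_k t \<eta> k) (r_k t \<eta> A b x k) (x (Suc k))
             \<le> sub_obj (\<lambda>z. g (extrap t x k) \<bullet> z) A b \<beta> \<gamma> \<delta> (extrap t x k) (p_k t \<eta> l k) (c_k t \<eta> k) (r_k t \<eta> A b x k) y))"
    and l_update: "\<And>k. k \<ge> 1 \<Longrightarrow>
       l (Suc k) = extrap t l k + \<delta> *\<^sub>R (c_k t \<eta> k *\<^sub>R (A *v x (Suc k)) - r_k t \<eta> A b x k)"
    and sol: "(xs, ls) \<in> KKT_set g A b"
  shows
    "summable (\<lambda>k. (\<eta> - \<rho>) * t (k + 2) * (aug_lag f A b \<beta> (x (k + 1)) ls - aug_lag f A b \<beta> xs ls))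
     \<and> summable (\<lambda>k. (1 - \<eta>) * t (k + 2) * (M_norm \<gamma> \<delta> (x (k + 2) - x (k + 1)) (l (k + 2) - l (k + 1)))\<^sup>2)
     \<and> (let E1 = aug_lag f A b \<beta> (x 1) ls - aug_lag f A b \<beta> xs ls
               + \<eta> / (2 * \<gamma>) * (norm (x 1 - xs))\<^sup>2 + \<eta> / (2 * \<delta>) * (norm (l 1 - ls))\<^sup>2 in
          (\<forall>k\<ge>1. aug_lag f A b \<beta> (x k) ls - aug_lag f A b \<beta> xs ls \<le> E1 / (t k)\<^sup>2)
        \<and> bounded (range (\<lambda>k. (x k, l k)))
        \<and> (\<forall>k>1. t k > 1 \<longrightarrow>
              M_norm \<gamma> \<delta> (x k - x (k - 1)) (l k - l (k - 1)) \<le> 2 * sqrt (2 * E1) / (t k - 1))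
        \<and> (\<exists>C>0. \<forall>k\<ge>1. norm (A *v x k - b) \<le> C / (t k)\<^sup>2
              \<and> \<bar>f (x k) - f xs\<bar> \<le> (E1 + norm ls * C + \<beta> * C\<^sup>2 / 2) / (t k)\<^sup>2))"
proof -
  interpret accelerated_alm f g A b t \<rho> \<eta> \<gamma> \<delta> \<beta> x l xs ls
    using f_convex f_grad sol t1 t_mono t_rate rho eta params init l_update
      sub_obj_update_prox_ineq[OF f_convex f_grad params x_update l_update]
    by unfold_locales auto
  obtain C where "C > 0" "\<And>k. k \<ge> 1 \<Longrightarrow> norm (A *v x k - b) \<le> C / (t k)\<^sup>2"
    using residual_bound by blast
  then have "\<exists>C>0. \<forall>k\<ge>1. norm (A *v x k - b) \<le> C / (t k)\<^sup>2
      \<and> \<bar>f (x k) - f xs\<bar> \<le> (E1 + norm ls * C + \<beta> * C\<^sup>2 / 2) / (t k)\<^sup>2"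
    using objective_bound by blast
  then show ?thesis
    using summable_gap summable_M_norm_step gap_rate iterates_bounded M_norm_step_le
    unfolding Let_def E1_def[symmetric] by blast
qed

end
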